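(* Let Problem A be \[ \min_{d,\{t_n\},\{E_n\}}\ \sum_{n=1}^N E_n\left(1+\frac{h_n}{g_n}\right)+\frac{\kappa L^3(D-d)^3}{T^2} \] subject to \[ d\le \sum_{n=1}^N t_nW\ln\left(1+\frac{E_nh_n}{t_n\sigma^2W}\right),\qquad 2\sum_{n=1}^N t_n\le T-\frac{Ld}{f_B},\qquad 0\le d\le D,\quad E_n\ge0,\ t_n\ge0\ \ \forall n. \] Let Problem B be \[ \min_{d,t,\{P_n\},\{w_n\}}\ \sum_{n=1}^N P_nt\left(1+\frac{h_n}{g_n}\right)+\frac{\kappa L^3(D-d)^3}{T^2} \] subject to \[ d\le \sum_{n=1}^N tw_n\ln\left(1+\frac{P_nh_n}{\sigma^2w_n}\right),\qquad 2t\le T-\frac{Ld}{f_B},\qquad \sum_{n=1}^N w_n\le W, \] \[ 0\le d\le D,\quad t\ge0,\quad P_n\ge0,\ w_n\ge 0\ \ \forall n. \] Then Problem A and Problem B are mathematically equivalent. In particular, both can be reformulated as the same optimization problem: \[ \min_{d,\{r_n\},\{E_n\}}\ \sum_{n=1}^N E_n\left(1+\frac{h_n}{g_n}\right)+\frac{\kappa L^3(D-d)^3}{T^2} \] subject to \[ d=\sum_{n=1}^N r_n\ln\left(1+\frac{E_nh_n}{\sigma^2 r_n}\right),\qquad 2\sum_{n=1}^N r_n=W\left(T-\frac{Ld}{f_B}\right),\qquad 0\le d\le D,\ E_n,r_n\ge 0. \] For Problem A this reformulation uses $r_n=t_nW$; for Problem B it uses $E_n=P_nt$ and $r_n=w_nt$.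 Consequently, the two problems have the same minimal objective value.
   Context: All parameters $N, h_n, g_n, W, \sigma^2, \kappa, L, D, T, f_B$ are given positive constants, and $n$ ranges over $\{1,\dots,N\}$. Terms of the form $x\ln(1+y/x)$ are interpreted as $0$ when $x=0$. *)

theory Defs
  imports Complex_Main
begin

text \<open>Convention: x ln(1 + y/x) is interpreted as 0 when x = 0.\<close>
definition xlog :: "real \<Rightarrow> real \<Rightarrow> real" where
  "xlog x y = (if x = 0 then 0 else x * ln (1 + y / x))"

definition feasA ::
  "nat \<Rightarrow> (nat \<Rightarrow> real) \<Rightarrow> real \<Rightarrow> real \<Rightarrow> real \<Rightarrow> real \<Rightarrow> real \<Rightarrow> real \<Rightarrow>
   real \<Rightarrow> (nat \<Rightarrow> real) \<Rightarrow> (nat \<Rightarrow> real) \<Rightarrow> bool" where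
  "feasA N h W \<sigma>2 L D T fB d t E \<longleftrightarrow>
     d \<le> (\<Sum>n=1..N. xlog (t n * W) (E n * h n / \<sigma>2)) \<and>
     2 * (\<Sum>n=1..N. t n) \<le> T - L * d / fB \<and>
     0 \<le> d \<and> d \<le> D \<and> (\<forall>n\<in>{1..N}. E n \<ge> 0 \<and> t n \<ge> 0)"

definition objA ::
  "nat \<Rightarrow> (nat \<Rightarrow> real) \<Rightarrow> (nat \<Rightarrow> real) \<Rightarrow> real \<Rightarrow> real \<Rightarrow> real \<Rightarrow> real \<Rightarrow>
   real \<Rightarrow> (nat \<Rightarrow> real) \<Rightarrow> real" where
  "objA N h g \<kappa> L D T d E =
     (\<Sum>n=1..N. E n * (1 + h n / g n)) + \<kappa> * L ^ 3 * (D - d) ^ 3 / T ^ 2"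

definition valA where
  "valA N h g W \<sigma>2 \<kappa> L D T fB =
     Inf {objA N h g \<kappa> L D T d E | d t E. feasA N h W \<sigma>2 L D T fB d t E}"

definition feasB ::
  "nat \<Rightarrow> (nat \<Rightarrow> real) \<Rightarrow> real \<Rightarrow> real \<Rightarrow> real \<Rightarrow> real \<Rightarrow> real \<Rightarrow> real \<Rightarrow>
   real \<Rightarrow> real \<Rightarrow> (nat \<Rightarrow> real) \<Rightarrow> (nat \<Rightarrow> real) \<Rightarrow> bool" where
  "feasB N h W \<sigma>2 L D T fB d t P w \<longleftrightarrow>
     d \<le> (\<Sum>n=1..N. t * xlog (w n) (P n * h n / \<sigma>2)) \<and>
     2 * t \<le> T - L * d / fB \<and>
     (\<Sum>n=1..N. w n) \<le> W \<and>
     0 \<le> d \<and> d \<le> D \<and> t \<ge> 0 \<and> (\<forall>n\<in>{1..N}. P n \<ge> 0 \<and> w n \<ge> 0)"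

definition objB ::
  "nat \<Rightarrow> (nat \<Rightarrow> real) \<Rightarrow> (nat \<Rightarrow> real) \<Rightarrow> real \<Rightarrow> real \<Rightarrow> real \<Rightarrow> real \<Rightarrow>
   real \<Rightarrow> real \<Rightarrow> (nat \<Rightarrow> real) \<Rightarrow> real" where
  "objB N h g \<kappa> L D T d t P =
     (\<Sum>n=1..N. P n * t * (1 + h n / g n)) + \<kappa> * L ^ 3 * (D - d) ^ 3 / T ^ 2"

definition valB where
  "valB N h g W \<sigma>2 \<kappa> L D T fB =
     Inf {objB N h g \<kappa> L D T d t P | d t P w. feasB N h W \<sigma>2 L D T fB d t P w}"

definition feasC ::
  "nat \<Rightarrow> (nat \<Rightarrow> real) \<Rightarrow> real \<Rightarrow> real \<Rightarrow> real \<Rightarrow> real \<Rightarrow> real \<Rightarrow> real \<Rightarrow>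
   real \<Rightarrow> (nat \<Rightarrow> real) \<Rightarrow> (nat \<Rightarrow> real) \<Rightarrow> bool" where
  "feasC N h W \<sigma>2 L D T fB d r E \<longleftrightarrow>
     d = (\<Sum>n=1..N. xlog (r n) (E n * h n / \<sigma>2)) \<and>
     2 * (\<Sum>n=1..N. r n) = W * (T - L * d / fB) \<and>
     0 \<le> d \<and> d \<le> D \<and> (\<forall>n\<in>{1..N}. E n \<ge> 0 \<and> r n \<ge> 0)"

definition valC where
  "valC N h g W \<sigma>2 \<kappa> L D T fB =
     Inf {objA N h g \<kappa> L D T d E | d r E. feasC N h W \<sigma>2 L D T fB d r E}"

end

theory Submission
  imports Defs "HOL-Analysis.Convex"
begin

text \<open>Under the substitutions r_n = t_n W (Problem A) and r_n = t w_n, E_n = P_n t (Problem B),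
  every feasible point of either problem satisfies the two coupling constraints of the common
  reformulation with \<open>\<le>\<close> instead of \<open>=\<close>, and every point of the reformulation is feasible
  for both problems with the same objective value. A relaxed point is made tight without
  increasing the objective: the slack of the time budget is given to one user, which can only
  raise the rate because r ln(1 + y/r) is nondecreasing in r, and then all energies are scaled
  by a common factor in [0, 1], chosen by the intermediate value theorem so that the rate
  becomes exactly d.\<close>

lemma xlog_zero_right [simp]: "xlog r 0 = 0"
  by (simp add: xlog_def)

lemma xlog_nonneg: "0 \<le> r \<Longrightarrow> 0 \<le> y \<Longrightarrow> 0 \<le> xlog r y"
  by (simp add: xlog_def)

text \<open>r ln(1 + y/r) is the perspective of the concave function ln(1 + y).\<close>
lemma xlog_mono:
  assumes "0 \<le> r1" "r1 \<le> r2" "0 \<le> y"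
  shows "xlog r1 y \<le> xlog r2 y"
proof (cases "r1 = 0")
  case True
  then show ?thesis using assms xlog_nonneg[of r2 y] by (simp add: xlog_def[of 0])
next
  case False
  with assms have r1: "0 < r1" and r2: "0 < r2" by auto
  define \<alpha> where "\<alpha> = r1 / r2"
  have "\<alpha> * ln (1 + y / r1) = (1 - \<alpha>) * ln 1 + \<alpha> * ln (1 + y / r1)"
    by simp
  also have "\<dots> \<le> ln ((1 - \<alpha>) *\<^sub>R 1 + \<alpha> *\<^sub>R (1 + y / r1))"
    using r1 r2 assms by (intro concave_onD[OF ln_concave]) (auto simp: \<alpha>_def add_pos_nonneg)
  also have "(1 - \<alpha>) *\<^sub>R 1 + \<alpha> *\<^sub>R (1 + y / r1) = 1 + y / r2"
    using r1 r2 by (simp add: \<alpha>_def field_simps)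
  finally have "r2 * (\<alpha> * ln (1 + y / r1)) \<le> r2 * ln (1 + y / r2)"
    using r2 by simp
  then show ?thesis
    using r1 r2 by (simp add: xlog_def \<alpha>_def)
qed

lemma xlog_scale: "0 \<le> t \<Longrightarrow> t * xlog r y = xlog (t * r) (t * y)"
  by (cases "t = 0"; cases "r = 0") (auto simp: xlog_def)

lemma continuous_on_xlog_scaled:
  assumes "0 \<le> r" "0 \<le> y"
  shows "continuous_on {0..} (\<lambda>c. xlog r (c * y))"
proof (cases "r = 0")
  case True
  then show ?thesis by (simp add: xlog_def)
next
  case False
  with assms have r: "0 < r" by simp
  then have "0 < 1 + c * y / r" if "0 \<le> c" for c
    using assms that by (intro add_pos_nonneg) simp_all
  with r have "continuous_on {0..} (\<lambda>c. r * ln (1 + c * y / r))"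
    by (intro continuous_intros) (auto simp: less_imp_neq[symmetric])
  with False show ?thesis by (simp add: xlog_def)
qed

lemma sum_xlog_scaled_attains:
  assumes "finite I" "\<And>n. n \<in> I \<Longrightarrow> 0 \<le> r n \<and> 0 \<le> y n"
    and "0 \<le> d" "d \<le> (\<Sum>n\<in>I. xlog (r n) (y n))"
  obtains c where "0 \<le> c" "c \<le> 1" "(\<Sum>n\<in>I. xlog (r n) (c * y n)) = d"
proof -
  have "continuous_on {0..1} (\<lambda>c. \<Sum>n\<in>I. xlog (r n) (c * y n))"
    using assms(2) by (intro continuous_on_sum continuous_on_subset[OF continuous_on_xlog_scaled]) auto
  with assms(3,4) obtain c where "0 \<le> c" "c \<le> 1" "(\<Sum>n\<in>I. xlog (r n) (c * y n)) = d"
    using IVT'[of "\<lambda>c. \<Sum>n\<in>I. xlog (r n) (c * y n)" 0 d 1] by auto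
  then show ?thesis by (rule that)
qed

lemma cInf_eq_if_mutually_dominated:
  fixes S U :: "'a::conditionally_complete_lattice set"
  assumes "S \<noteq> {}" "U \<noteq> {}" "bdd_below S" "bdd_below U"
    and "\<And>x. x \<in> S \<Longrightarrow> \<exists>y\<in>U. y \<le> x" "\<And>y. y \<in> U \<Longrightarrow> \<exists>x\<in>S. x \<le> y"
  shows "Inf S = Inf U"
  using assms by (intro antisym cInf_mono) auto

definition feasC_relaxed ::
  "nat \<Rightarrow> (nat \<Rightarrow> real) \<Rightarrow> real \<Rightarrow> real \<Rightarrow> real \<Rightarrow> real \<Rightarrow> real \<Rightarrow> real \<Rightarrow>
   real \<Rightarrow> (nat \<Rightarrow> real) \<Rightarrow> (nat \<Rightarrow> real) \<Rightarrow> bool" where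
  "feasC_relaxed N h W \<sigma>2 L D T fB d r E \<longleftrightarrow>
     d \<le> (\<Sum>n=1..N. xlog (r n) (E n * h n / \<sigma>2)) \<and>
     2 * (\<Sum>n=1..N. r n) \<le> W * (T - L * d / fB) \<and>
     0 \<le> d \<and> d \<le> D \<and> (\<forall>n\<in>{1..N}. E n \<ge> 0 \<and> r n \<ge> 0)"

context
  fixes N :: nat and h g :: "nat \<Rightarrow> real" and W \<sigma>2 \<kappa> L D T fB :: real
begin

lemma feasC_imp_relaxed:
  "feasC N h W \<sigma>2 L D T fB d r E \<Longrightarrow> feasC_relaxed N h W \<sigma>2 L D T fB d r E"
  by (simp add: feasC_def feasC_relaxed_def)

text \<open>The slack of the time constraint goes into the bandwidth-time of user 1, which can only
  raise the rate; the energies are then scaled down until the rate constraint is tight.\<close>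
lemma feasC_relaxed_tighten:
  assumes "0 < N" "\<And>n. n \<in> {1..N} \<Longrightarrow> 0 \<le> h n" "0 \<le> \<sigma>2"
    and "feasC_relaxed N h W \<sigma>2 L D T fB d r E"
  obtains r' c where "0 \<le> c" "c \<le> 1" "feasC N h W \<sigma>2 L D T fB d r' (\<lambda>n. c * E n)"
proof -
  define s where "s = (W * (T - L * d / fB) - 2 * (\<Sum>n=1..N. r n)) / 2"
  define r' where "r' n = r n + (if n = 1 then s else 0)" for n
  note feas = assms(4)[unfolded feasC_relaxed_def]
  have "0 \<le> s" using feas by (simp add: s_def)
  then have r': "0 \<le> r' n" "r n \<le> r' n" if "n \<in> {1..N}" for n
    using feas that by (auto simp: r'_def)
  have "(\<Sum>n=1..N. r' n) = (\<Sum>n=1..N. r n) + s"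
    using assms(1) by (simp add: r'_def sum.distrib)
  then have time: "2 * (\<Sum>n=1..N. r' n) = W * (T - L * d / fB)"
    by (simp add: s_def field_simps)
  have y: "0 \<le> E n * h n / \<sigma>2" if "n \<in> {1..N}" for n
    using feas assms(2,3) that by simp
  have "(\<Sum>n=1..N. xlog (r n) (E n * h n / \<sigma>2)) \<le> (\<Sum>n=1..N. xlog (r' n) (E n * h n / \<sigma>2))"
    using feas by (intro sum_mono xlog_mono) (auto simp: r' y)
  with feas have "d \<le> (\<Sum>n=1..N. xlog (r' n) (E n * h n / \<sigma>2))"
    by linarith
  then obtain c where c: "0 \<le> c" "c \<le> 1" "(\<Sum>n=1..N. xlog (r' n) (c * (E n * h n / \<sigma>2))) = d"
    using sum_xlog_scaled_attains[of "{1..N}" r' "\<lambda>n. E n * h n / \<sigma>2" d] feas r' y by auto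
  have "feasC N h W \<sigma>2 L D T fB d r' (\<lambda>n. c * E n)"
    using c feas time r' by (auto simp: feasC_def mult.assoc)
  with c(1,2) show ?thesis by (rule that)
qed

lemma objA_mono:
  assumes "\<And>n. n \<in> {1..N} \<Longrightarrow> 0 \<le> 1 + h n / g n \<and> E' n \<le> E n"
  shows "objA N h g \<kappa> L D T d E' \<le> objA N h g \<kappa> L D T d E"
  unfolding objA_def using assms by (auto intro!: sum_mono mult_right_mono)

lemma objA_nonneg:
  assumes "\<And>n. n \<in> {1..N} \<Longrightarrow> 0 \<le> 1 + h n / g n \<and> 0 \<le> E n"
    and "0 \<le> \<kappa>" "0 \<le> L" "d \<le> D"
  shows "0 \<le> objA N h g \<kappa> L D T d E"
  unfolding objA_def using assms by (intro add_nonneg_nonneg sum_nonneg) auto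

lemma feasC_witness:
  assumes "0 < N" "0 \<le> W" "0 \<le> T" "0 \<le> D"
  shows "feasC N h W \<sigma>2 L D T fB 0 (\<lambda>n. if n = 1 then W * T / 2 else 0) (\<lambda>n. 0)"
  using assms by (simp add: feasC_def sum.delta')

lemma feasA_imp_relaxed:
  assumes "0 \<le> W" "feasA N h W \<sigma>2 L D T fB d t E"
  shows "feasC_relaxed N h W \<sigma>2 L D T fB d (\<lambda>n. t n * W) E"
proof -
  have "2 * (\<Sum>n=1..N. t n * W) = W * (2 * (\<Sum>n=1..N. t n))"
    by (simp add: sum_distrib_left mult_ac)
  also have "\<dots> \<le> W * (T - L * d / fB)"
    using assms by (intro mult_left_mono) (auto simp: feasA_def)
  finally show ?thesis
    using assms by (auto simp: feasA_def feasC_relaxed_def)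
qed

lemma feasC_imp_feasA:
  "0 < W \<Longrightarrow> feasC N h W \<sigma>2 L D T fB d r E \<Longrightarrow> feasA N h W \<sigma>2 L D T fB d (\<lambda>n. r n / W) E"
  by (auto simp: feasA_def feasC_def sum_divide_distrib[symmetric])

lemma objB_eq_objA: "objB N h g \<kappa> L D T d t P = objA N h g \<kappa> L D T d (\<lambda>n. P n * t)"
  by (simp add: objA_def objB_def)

lemma feasB_imp_relaxed:
  assumes "0 \<le> W" "feasB N h W \<sigma>2 L D T fB d t P w"
  shows "feasC_relaxed N h W \<sigma>2 L D T fB d (\<lambda>n. t * w n) (\<lambda>n. P n * t)"
proof -
  note feas = assms(2)[unfolded feasB_def]
  have "d \<le> (\<Sum>n=1..N. t * xlog (w n) (P n * h n / \<sigma>2))"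
    using feas by simp
  also have "\<dots> = (\<Sum>n=1..N. xlog (t * w n) (P n * t * h n / \<sigma>2))"
    using feas by (simp add: xlog_scale mult_ac)
  finally have rate: "d \<le> (\<Sum>n=1..N. xlog (t * w n) (P n * t * h n / \<sigma>2))" .
  have "2 * (\<Sum>n=1..N. t * w n) = 2 * t * (\<Sum>n=1..N. w n)"
    by (simp add: sum_distrib_left mult_ac)
  also have "\<dots> \<le> W * (2 * t)"
    using feas by (simp add: mult_left_mono mult.commute[of W])
  also have "\<dots> \<le> W * (T - L * d / fB)"
    using feas assms(1) by (intro mult_left_mono) auto
  finally show ?thesis
    using feas rate by (auto simp: feasC_relaxed_def)
qed

text \<open>The common duration t is forced to be positive: t = 0 would give d = 0 and then
  W T = 0.\<close>
lemma feasC_imp_feasB: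
  assumes "0 < W" "0 < T" "feasC N h W \<sigma>2 L D T fB d r E"
  obtains t P w where "feasB N h W \<sigma>2 L D T fB d t P w" "\<And>n. P n * t = E n"
proof -
  note feas = assms(3)[unfolded feasC_def]
  define t where "t = (\<Sum>n=1..N. r n) / W"
  have "0 < t"
  proof (rule ccontr)
    assume "\<not> 0 < t"
    moreover have "0 \<le> (\<Sum>n=1..N. r n)"
      using feas by (intro sum_nonneg) auto
    ultimately have "(\<Sum>n=1..N. r n) = 0"
      using assms(1) by (auto simp: t_def zero_less_divide_iff)
    with feas have "\<forall>n\<in>{1..N}. r n = 0"
      using sum_nonneg_eq_0_iff[of "{1..N}" r] by auto
    with feas have "d = 0"
      by (simp add: xlog_def)
    with feas assms(1,2) \<open>(\<Sum>n=1..N. r n) = 0\<close> show False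
      by simp
  qed
  define P where "P n = E n / t" for n
  define w where "w n = r n / t" for n
  have "(\<Sum>n=1..N. w n) = (\<Sum>n=1..N. r n) / t"
    by (simp add: w_def sum_divide_distrib)
  also have "\<dots> = W"
    using \<open>0 < t\<close> assms(1) by (auto simp: t_def field_simps)
  finally have "(\<Sum>n=1..N. w n) = W" .
  moreover have "(\<Sum>n=1..N. t * xlog (w n) (P n * h n / \<sigma>2)) = (\<Sum>n=1..N. xlog (r n) (E n * h n / \<sigma>2))"
    using \<open>0 < t\<close> by (simp add: xlog_scale w_def P_def)
  ultimately have "feasB N h W \<sigma>2 L D T fB d t P w"
    using feas \<open>0 < t\<close> assms(1) by (auto simp: feasB_def t_def P_def w_def field_simps)
  moreover have "P n * t = E n" for n
    using \<open>0 < t\<close> by (simp add: P_def)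
  ultimately show ?thesis by (rule that)
qed

lemma Inf_eq_valC:
  assumes "0 < N" and hg: "\<And>n. n \<in> {1..N} \<Longrightarrow> 0 \<le> h n \<and> 0 \<le> g n"
    and "0 \<le> W" "0 \<le> \<sigma>2" "0 \<le> \<kappa>" "0 \<le> L" "0 \<le> D" "0 \<le> T"
    and relax: "\<And>x. x \<in> S \<Longrightarrow>
      \<exists>d r E. feasC_relaxed N h W \<sigma>2 L D T fB d r E \<and> objA N h g \<kappa> L D T d E \<le> x"
    and realise: "\<And>d r E. feasC N h W \<sigma>2 L D T fB d r E \<Longrightarrow>
      \<exists>x\<in>S. x \<le> objA N h g \<kappa> L D T d E"
  shows "Inf S = valC N h g W \<sigma>2 \<kappa> L D T fB"
  unfolding valC_def
proof (rule cInf_eq_if_mutually_dominated)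
  let ?C = "{objA N h g \<kappa> L D T d E | d r E. feasC N h W \<sigma>2 L D T fB d r E}"
  have weight: "0 \<le> 1 + h n / g n" if "n \<in> {1..N}" for n
    using hg[OF that] by simp
  have relaxed_value_nonneg: "0 \<le> objA N h g \<kappa> L D T d E"
    if "feasC_relaxed N h W \<sigma>2 L D T fB d r E" for d r E
    using that assms weight by (intro objA_nonneg) (auto simp: feasC_relaxed_def)
  have witness: "feasC N h W \<sigma>2 L D T fB 0 (\<lambda>n. if n = 1 then W * T / 2 else 0) (\<lambda>n. 0)"
    using assms by (intro feasC_witness) auto
  then show "?C \<noteq> {}" by blast
  from realise[OF witness] show "S \<noteq> {}" by blast
  show "bdd_below S"
  proof (rule bdd_belowI)
    fix x assume "x \<in> S"
    then obtain d r E where "feasC_relaxed N h W \<sigma>2 L D T fB d r E" "objA N h g \<kappa> L D T d E \<le> x"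
      using relax by blast
    with relaxed_value_nonneg show "0 \<le> x" by (meson order_trans)
  qed
  show "bdd_below ?C"
  proof (rule bdd_belowI)
    fix y assume "y \<in> ?C"
    then show "0 \<le> y" using relaxed_value_nonneg feasC_imp_relaxed by blast
  qed
  show "\<exists>x\<in>S. x \<le> y" if "y \<in> ?C" for y
    using that realise by blast
  show "\<exists>y\<in>?C. y \<le> x" if x: "x \<in> S" for x
  proof -
    obtain d r E where feas: "feasC_relaxed N h W \<sigma>2 L D T fB d r E"
      and le: "objA N h g \<kappa> L D T d E \<le> x"
      using relax[OF x] by blast
    have "0 \<le> h n" if "n \<in> {1..N}" for n
      using hg[OF that] by simp
    then obtain r' c where c: "0 \<le> c" "c \<le> 1"
      and tight: "feasC N h W \<sigma>2 L D T fB d r' (\<lambda>n. c * E n)"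
      using feasC_relaxed_tighten[OF \<open>0 < N\<close> _ \<open>0 \<le> \<sigma>2\<close> feas] by blast
    have "objA N h g \<kappa> L D T d (\<lambda>n. c * E n) \<le> objA N h g \<kappa> L D T d E"
      using feas c weight by (intro objA_mono) (auto simp: feasC_relaxed_def mult_left_le_one_le)
    with le have "objA N h g \<kappa> L D T d (\<lambda>n. c * E n) \<le> x"
      by linarith
    with tight show ?thesis by blast
  qed
qed

lemma valA_eq_valC:
  assumes "0 < N" "\<And>n. n \<in> {1..N} \<Longrightarrow> 0 \<le> h n \<and> 0 \<le> g n"
    and "0 < W" "0 < \<sigma>2" "0 \<le> \<kappa>" "0 \<le> L" "0 \<le> D" "0 < T"
  shows "valA N h g W \<sigma>2 \<kappa> L D T fB = valC N h g W \<sigma>2 \<kappa> L D T fB"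
  unfolding valA_def
proof (rule Inf_eq_valC)
  show "\<exists>d r E. feasC_relaxed N h W \<sigma>2 L D T fB d r E \<and> objA N h g \<kappa> L D T d E \<le> x"
    if "x \<in> {objA N h g \<kappa> L D T d E | d t E. feasA N h W \<sigma>2 L D T fB d t E}" for x
    using that feasA_imp_relaxed[OF less_imp_le[OF \<open>0 < W\<close>]] by blast
  show "\<exists>x\<in>{objA N h g \<kappa> L D T d E | d t E. feasA N h W \<sigma>2 L D T fB d t E}.
      x \<le> objA N h g \<kappa> L D T d E" if "feasC N h W \<sigma>2 L D T fB d r E" for d r E
    using feasC_imp_feasA[OF \<open>0 < W\<close> that] by blast
qed (use assms in auto)

lemma valB_eq_valC:
  assumes "0 < N" "\<And>n. n \<in> {1..N} \<Longrightarrow> 0 \<le> h n \<and> 0 \<le> g n"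
    and "0 < W" "0 < \<sigma>2" "0 \<le> \<kappa>" "0 \<le> L" "0 \<le> D" "0 < T"
  shows "valB N h g W \<sigma>2 \<kappa> L D T fB = valC N h g W \<sigma>2 \<kappa> L D T fB"
  unfolding valB_def
proof (rule Inf_eq_valC)
  show "\<exists>d r E. feasC_relaxed N h W \<sigma>2 L D T fB d r E \<and> objA N h g \<kappa> L D T d E \<le> x"
    if "x \<in> {objB N h g \<kappa> L D T d t P | d t P w. feasB N h W \<sigma>2 L D T fB d t P w}" for x
    using that feasB_imp_relaxed[OF less_imp_le[OF \<open>0 < W\<close>]] unfolding objB_eq_objA by blast
  show "\<exists>x\<in>{objB N h g \<kappa> L D T d t P | d t P w. feasB N h W \<sigma>2 L D T fB d t P w}.
      x \<le> objA N h g \<kappa> L D T d E" if C: "feasC N h W \<sigma>2 L D T fB d r E" for d r E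
  proof -
    obtain t P w where feasB: "feasB N h W \<sigma>2 L D T fB d t P w" and "\<And>n. P n * t = E n"
      using feasC_imp_feasB[OF \<open>0 < W\<close> \<open>0 < T\<close> C] by blast
    then have "objB N h g \<kappa> L D T d t P \<le> objA N h g \<kappa> L D T d E"
      by (simp add: objB_eq_objA)
    with feasB show ?thesis
      by blast
  qed
qed (use assms in auto)

end

theorem lemma6:
  fixes N :: nat and h g :: "nat \<Rightarrow> real" and W \<sigma>2 \<kappa> L D T fB :: real
  assumes "N > 0" and "\<forall>n\<in>{1..N}. h n > 0 \<and> g n > 0"
    and "W > 0" and "\<sigma>2 > 0" and "\<kappa> > 0" and "L > 0" and "D > 0" and "T > 0" and "fB > 0"
  shows "valA N h g W \<sigma>2 \<kappa> L D T fB = valC N h g W \<sigma>2 \<kappa> L D T fB \<and>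
         valB N h g W \<sigma>2 \<kappa> L D T fB = valC N h g W \<sigma>2 \<kappa> L D T fB \<and>
         valA N h g W \<sigma>2 \<kappa> L D T fB = valB N h g W \<sigma>2 \<kappa> L D T fB"
proof -
  have hg: "\<And>n. n \<in> {1..N} \<Longrightarrow> 0 \<le> h n \<and> 0 \<le> g n"
    using assms(2) by fastforce
  have "valA N h g W \<sigma>2 \<kappa> L D T fB = valC N h g W \<sigma>2 \<kappa> L D T fB"
    using assms by (intro valA_eq_valC[OF _ hg]) auto
  moreover have "valB N h g W \<sigma>2 \<kappa> L D T fB = valC N h g W \<sigma>2 \<kappa> L D T fB"
    using assms by (intro valB_eq_valC[OF _ hg]) auto
  ultimately show ?thesis by simp
qed

end
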